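(* Let $n\ge 1$ and let the braid group $B_{n+1}$, with standard generators $\sigma_1,\dotsc,\sigma_n$, act on $(\mathbb{C}/\pi\mathbb{Z})^{n+1}$ by \[ \sigma_i:\ \phi_i\mapsto 2\phi_i-\phi_{i+1},\qquad \phi_{i+1}\mapsto\phi_i,\qquad \phi_j\mapsto\phi_j\ (j\ne i,i+1). \] Then the orbit of a point $(\phi_1,\dotsc,\phi_{n+1})\in(\mathbb{C}/\pi\mathbb{Z})^{n+1}$ under this action is finite if and only if $\phi_i-\phi_{i+1}\in\pi\mathbb{Q}$ (modulo $\pi\mathbb{Z}$) for every $i=1,\dotsc,n$.
   Context: The formulas have integer coefficients, so they are well defined on $(\mathbb{C}/\pi\mathbb{Z})^{n+1}$; the condition $\phi_i-\phi_{i+1}\in\pi\mathbb{Q}$ means that some (equivalently every) representative of $\phi_i-\phi_{i+1}\in\mathbb{C}/\pi\mathbb{Z}$ lies in $\pi\mathbb{Q}$. *)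

theory Defs
  imports Complex_Main
begin

text \<open>Points of (C/pi Z)^(n+1) are represented by functions phi :: nat => complex,
  coordinates indexed 1..n+1 (values at other indices are irrelevant).\<close>

definition braid_sigma :: "nat \<Rightarrow> (nat \<Rightarrow> complex) \<Rightarrow> (nat \<Rightarrow> complex)" where
  "braid_sigma i \<phi> = \<phi>(i := 2 * \<phi> i - \<phi> (Suc i), Suc i := \<phi> i)"

definition braid_sigma_inv :: "nat \<Rightarrow> (nat \<Rightarrow> complex) \<Rightarrow> (nat \<Rightarrow> complex)" where
  "braid_sigma_inv i \<phi> = \<phi>(i := \<phi> (Suc i), Suc i := 2 * \<phi> (Suc i) - \<phi> i)"

inductive_set braid_orbit :: "nat \<Rightarrow> (nat \<Rightarrow> complex) \<Rightarrow> (nat \<Rightarrow> complex) set"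
  for n :: nat and \<phi> :: "nat \<Rightarrow> complex" where
  base: "\<phi> \<in> braid_orbit n \<phi>"
| sig: "\<psi> \<in> braid_orbit n \<phi> \<Longrightarrow> 1 \<le> i \<Longrightarrow> i \<le> n \<Longrightarrow> braid_sigma i \<psi> \<in> braid_orbit n \<phi>"
| sig_inv: "\<psi> \<in> braid_orbit n \<phi> \<Longrightarrow> 1 \<le> i \<Longrightarrow> i \<le> n \<Longrightarrow> braid_sigma_inv i \<psi> \<in> braid_orbit n \<phi>"

definition class_mod_pi :: "complex \<Rightarrow> complex set" where
  "class_mod_pi z = {w. \<exists>k::int. z - w = complex_of_real pi * of_int k}"

definition point_mod_pi :: "nat \<Rightarrow> (nat \<Rightarrow> complex) \<Rightarrow> (nat \<Rightarrow> complex set)" where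
  "point_mod_pi n \<phi> = (\<lambda>i. if 1 \<le> i \<and> i \<le> Suc n then class_mod_pi (\<phi> i) else {})"

end

theory Submission
  imports Defs
begin

text \<open>
  The generator \<open>\<sigma>\<^sub>i\<close> fixes the difference \<open>d = \<phi>\<^sub>i - \<phi>\<^sub>i\<^sub>+\<^sub>1\<close> and translates both
  coordinates by \<open>d\<close>, so its powers move \<open>\<phi>\<^sub>i\<close> along the progression \<open>\<phi>\<^sub>i + k d\<close>; this
  progression meets only finitely many classes mod \<open>\<pi>\<close> exactly when \<open>d \<in> \<pi>\<rat>\<close>.
  Conversely, if all differences lie in \<open>\<pi>\<rat>\<close>, choose a common denominator \<open>N\<close>: all
  coordinates lie in \<open>\<phi>\<^sub>1 + (\<pi>/N)\<int>\<close>, a set preserved by the moves \<open>(x, y) \<mapsto> 2x - y\<close>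
  and meeting only \<open>N\<close> classes mod \<open>\<pi>\<close>.
\<close>

lemma class_mod_pi_eq_iff:
  "class_mod_pi a = class_mod_pi b \<longleftrightarrow> (\<exists>k::int. a - b = complex_of_real pi * of_int k)"
proof
  assume "class_mod_pi a = class_mod_pi b"
  moreover have "b \<in> class_mod_pi b"
    unfolding class_mod_pi_def by (auto intro: exI[of _ 0])
  ultimately show "\<exists>k::int. a - b = complex_of_real pi * of_int k"
    unfolding class_mod_pi_def by auto
next
  assume "\<exists>k::int. a - b = complex_of_real pi * of_int k"
  then obtain k :: int where k: "a - b = complex_of_real pi * of_int k" ..
  have "a - w = complex_of_real pi * of_int (l + k)" if "b - w = complex_of_real pi * of_int l" for w l
    using k that by (simp add: algebra_simps)
  moreover have "b - w = complex_of_real pi * of_int (l - k)" if "a - w = complex_of_real pi * of_int l" for w l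
    using k that by (simp add: algebra_simps)
  ultimately show "class_mod_pi a = class_mod_pi b"
    unfolding class_mod_pi_def by blast
qed

lemma braid_sigma_apply [simp]:
  "braid_sigma i \<phi> i = 2 * \<phi> i - \<phi> (Suc i)"
  "braid_sigma i \<phi> (Suc i) = \<phi> i"
  by (simp_all add: braid_sigma_def)

lemma funpow_braid_sigma:
  fixes i :: nat and \<phi> :: "nat \<Rightarrow> complex"
  defines "d \<equiv> \<phi> i - \<phi> (Suc i)"
  shows "(braid_sigma i ^^ k) \<phi> i = \<phi> i + of_nat k * d"
    and "(braid_sigma i ^^ k) \<phi> (Suc i) = \<phi> (Suc i) + of_nat k * d"
proof -
  have "(braid_sigma i ^^ k) \<phi> i = \<phi> i + of_nat k * d \<and>
        (braid_sigma i ^^ k) \<phi> (Suc i) = \<phi> (Suc i) + of_nat k * d"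
  proof (induction k)
    case (Suc k)
    from Suc.IH have IH: "(braid_sigma i ^^ k) \<phi> i = \<phi> i + of_nat k * d"
      "(braid_sigma i ^^ k) \<phi> (Suc i) = \<phi> (Suc i) + of_nat k * d"
      by simp_all
    show ?case
      by (simp only: funpow.simps comp_apply braid_sigma_apply IH) (simp add: d_def algebra_simps)
  qed simp
  then show "(braid_sigma i ^^ k) \<phi> i = \<phi> i + of_nat k * d"
    and "(braid_sigma i ^^ k) \<phi> (Suc i) = \<phi> (Suc i) + of_nat k * d"
    by simp_all
qed

lemma funpow_braid_sigma_in_orbit:
  "1 \<le> i \<Longrightarrow> i \<le> n \<Longrightarrow> (braid_sigma i ^^ k) \<phi> \<in> braid_orbit n \<phi>"
  by (induction k) (auto intro: braid_orbit.intros)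

lemma rational_if_finite_classes_progression:
  assumes "finite (range (\<lambda>k::nat. class_mod_pi (c + of_nat k * d)))"
  shows "\<exists>q::rat. d = complex_of_real pi * of_rat q"
proof -
  from assms have "\<not> inj (\<lambda>k::nat. class_mod_pi (c + of_nat k * d))"
    using finite_imageD infinite_UNIV_nat by blast
  then obtain k1 k2 :: nat
    where "k1 \<noteq> k2" and "class_mod_pi (c + of_nat k1 * d) = class_mod_pi (c + of_nat k2 * d)"
    unfolding inj_def by blast
  define r where "r = int k1 - int k2"
  then have "r \<noteq> 0"
    using \<open>k1 \<noteq> k2\<close> by simp
  obtain m :: int where "of_int r * d = complex_of_real pi * of_int m"
    using \<open>class_mod_pi _ = _\<close> by (auto simp: r_def class_mod_pi_eq_iff algebra_simps)
  with \<open>r \<noteq> 0\<close> have "d = complex_of_real pi * of_rat (of_int m / of_int r)"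
    by (simp add: of_rat_divide field_simps)
  then show ?thesis ..
qed

lemma rational_difference_if_finite_orbit:
  assumes "finite (point_mod_pi n ` braid_orbit n \<phi>)" and "1 \<le> i" "i \<le> n"
  shows "\<exists>q::rat. \<phi> i - \<phi> (Suc i) = complex_of_real pi * of_rat q"
proof (rule rational_if_finite_classes_progression)
  have "class_mod_pi (\<phi> i + of_nat k * (\<phi> i - \<phi> (Suc i))) =
        point_mod_pi n ((braid_sigma i ^^ k) \<phi>) i" for k
    using \<open>1 \<le> i\<close> \<open>i \<le> n\<close> by (simp add: point_mod_pi_def funpow_braid_sigma)
  then have "range (\<lambda>k. class_mod_pi (\<phi> i + of_nat k * (\<phi> i - \<phi> (Suc i))))
      \<subseteq> (\<lambda>p. p i) ` point_mod_pi n ` braid_orbit n \<phi>"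
    using funpow_braid_sigma_in_orbit[OF \<open>1 \<le> i\<close> \<open>i \<le> n\<close>] by blast
  then show "finite (range (\<lambda>k. class_mod_pi (\<phi> i + of_nat k * (\<phi> i - \<phi> (Suc i)))))"
    using assms(1) by (blast intro: finite_subset)
qed

definition pi_lattice_coset :: "complex \<Rightarrow> int \<Rightarrow> complex set" where
  "pi_lattice_coset c N = range (\<lambda>m::int. c + complex_of_real pi * of_int m / of_int N)"

lemma pi_lattice_coset_affine_closed:
  assumes "x \<in> pi_lattice_coset c N" "y \<in> pi_lattice_coset c N"
  shows "2 * x - y \<in> pi_lattice_coset c N"
proof -
  obtain m1 m2 :: int where "x = c + complex_of_real pi * of_int m1 / of_int N"
    and "y = c + complex_of_real pi * of_int m2 / of_int N"
    using assms unfolding pi_lattice_coset_def by blast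
  then have "2 * x - y = c + complex_of_real pi * of_int (2 * m1 - m2) / of_int N"
    by (simp add: algebra_simps add_divide_distrib diff_divide_distrib)
  then show ?thesis
    unfolding pi_lattice_coset_def by blast
qed

lemma pi_lattice_coset_diff:
  assumes "x \<in> pi_lattice_coset c N" "x - y = complex_of_real pi * of_int m / of_int N"
  shows "y \<in> pi_lattice_coset c N"
proof -
  obtain l :: int where "x = c + complex_of_real pi * of_int l / of_int N"
    using assms(1) unfolding pi_lattice_coset_def by blast
  with assms(2) have "y = c + complex_of_real pi * of_int (l - m) / of_int N"
    by (simp add: algebra_simps diff_divide_distrib)
  then show ?thesis
    unfolding pi_lattice_coset_def by blast
qed

lemma finite_class_mod_pi_pi_lattice_coset:
  assumes "N > 0"
  shows "finite (class_mod_pi ` pi_lattice_coset c N)"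
proof -
  let ?z = "\<lambda>m::int. c + complex_of_real pi * of_int m / of_int N"
  have "class_mod_pi (?z m) \<in> (\<lambda>m. class_mod_pi (?z m)) ` {0..<N}" for m
  proof (rule image_eqI)
    have "(of_int m :: complex) = of_int (m mod N) + of_int N * of_int (m div N)"
      by (metis mod_mult_div_eq of_int_add of_int_mult add.commute)
    then have "?z m - ?z (m mod N) = complex_of_real pi * of_int (m div N)"
      using assms by (simp add: field_simps)
    then show "class_mod_pi (?z m) = class_mod_pi (?z (m mod N))"
      by (auto simp: class_mod_pi_eq_iff)
    show "m mod N \<in> {0..<N}"
      using assms by simp
  qed
  then have "class_mod_pi ` pi_lattice_coset c N \<subseteq> (\<lambda>m. class_mod_pi (?z m)) ` {0..<N}"
    unfolding pi_lattice_coset_def by blast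
  then show ?thesis
    by (rule finite_subset) simp
qed

lemma braid_orbit_coordinates_closed:
  assumes closed: "\<And>x y. x \<in> A \<Longrightarrow> y \<in> A \<Longrightarrow> 2 * x - y \<in> A"
    and "\<forall>j\<in>{1..Suc n}. \<phi> j \<in> A" and "\<psi> \<in> braid_orbit n \<phi>"
  shows "\<forall>j\<in>{1..Suc n}. \<psi> j \<in> A"
  using assms(3)
proof (induction rule: braid_orbit.induct)
  case base
  show ?case using assms(2) .
next
  case (sig \<psi> i)
  then show ?case
    using closed[of "\<psi> i" "\<psi> (Suc i)"] by (auto simp: braid_sigma_def)
next
  case (sig_inv \<psi> i)
  then show ?case
    using closed[of "\<psi> (Suc i)" "\<psi> i"] by (auto simp: braid_sigma_inv_def)
qed

lemma finite_point_mod_pi_image: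
  assumes "finite (class_mod_pi ` A)" and "\<forall>\<psi>\<in>S. \<forall>j\<in>{1..Suc n}. \<psi> j \<in> A"
  shows "finite (point_mod_pi n ` S)"
proof (rule finite_subset)
  show "point_mod_pi n ` S \<subseteq>
      {p. \<forall>j. (j \<in> {1..Suc n} \<longrightarrow> p j \<in> class_mod_pi ` A) \<and> (j \<notin> {1..Suc n} \<longrightarrow> p j = {})}"
    using assms(2) by (auto simp: point_mod_pi_def)
  show "finite
      {p. \<forall>j. (j \<in> {1..Suc n} \<longrightarrow> p j \<in> class_mod_pi ` A) \<and> (j \<notin> {1..Suc n} \<longrightarrow> p j = {})}"
    using assms(1) by (intro finite_set_of_finite_funs) simp_all
qed

lemma rat_common_denominator:
  fixes q :: "'a \<Rightarrow> rat"
  assumes "finite I"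
  obtains N :: int where "N > 0" and "\<And>i. i \<in> I \<Longrightarrow> \<exists>m::int. q i = of_int m / of_int N"
proof
  define den where "den i = snd (quotient_of (q i))" for i
  have den_pos: "den i > 0" for i
    unfolding den_def by (rule quotient_of_denom_pos')
  then show "(\<Prod>i\<in>I. den i) > 0"
    by (simp add: prod_pos)
  fix i assume "i \<in> I"
  from dvd_prodI[OF assms this, of den] obtain c where c: "(\<Prod>i\<in>I. den i) = den i * c"
    by (rule dvdE)
  with den_pos[of i] \<open>(\<Prod>i\<in>I. den i) > 0\<close> have "c \<noteq> 0"
    by auto
  have "q i = of_int (fst (quotient_of (q i))) / of_int (den i)"
    unfolding den_def by (rule quotient_of_div) simp
  also have "\<dots> = of_int (fst (quotient_of (q i)) * c) / of_int (\<Prod>i\<in>I. den i)"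
    using \<open>c \<noteq> 0\<close> den_pos[of i] unfolding c by simp
  finally show "\<exists>m::int. q i = of_int m / of_int (\<Prod>i\<in>I. den i)" ..
qed

lemma finite_orbit_if_rational_differences:
  assumes "\<forall>i\<in>{1..n}. \<exists>q::rat. \<phi> i - \<phi> (Suc i) = complex_of_real pi * of_rat q"
  shows "finite (point_mod_pi n ` braid_orbit n \<phi>)"
proof -
  obtain q where q: "\<And>i. i \<in> {1..n} \<Longrightarrow> \<phi> i - \<phi> (Suc i) = complex_of_real pi * of_rat (q i)"
    using assms by metis
  obtain N :: int where "N > 0" and N: "\<And>i. i \<in> {1..n} \<Longrightarrow> \<exists>m::int. q i = of_int m / of_int N"
    using rat_common_denominator[of "{1..n}" q] by blast
  have coords_Suc: "\<phi> (Suc j) \<in> pi_lattice_coset (\<phi> 1) N" if "j \<le> n" for j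
    using that
  proof (induction j)
    case 0
    show ?case
      unfolding pi_lattice_coset_def by (auto intro: range_eqI[of _ _ 0])
  next
    case (Suc j)
    then obtain m :: int where "q (Suc j) = of_int m / of_int N"
      using N[of "Suc j"] by auto
    with q[of "Suc j"] Suc have "\<phi> (Suc j) - \<phi> (Suc (Suc j)) = complex_of_real pi * of_int m / of_int N"
      by (simp add: of_rat_divide)
    with Suc show ?case
      by (auto intro: pi_lattice_coset_diff)
  qed
  have "\<phi> j \<in> pi_lattice_coset (\<phi> 1) N" if "j \<in> {1..Suc n}" for j
    using coords_Suc[of "j - 1"] that by (cases j) auto
  then have "\<forall>\<psi>\<in>braid_orbit n \<phi>. \<forall>j\<in>{1..Suc n}. \<psi> j \<in> pi_lattice_coset (\<phi> 1) N"
    using braid_orbit_coordinates_closed[OF pi_lattice_coset_affine_closed] by blast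
  then show ?thesis
    by (rule finite_point_mod_pi_image[OF finite_class_mod_pi_pi_lattice_coset[OF \<open>N > 0\<close>]])
qed

theorem mainTheorem2:
  fixes n :: nat and \<phi> :: "nat \<Rightarrow> complex"
  assumes "1 \<le> n"
  shows "finite (point_mod_pi n ` braid_orbit n \<phi>) \<longleftrightarrow>
         (\<forall>i\<in>{1..n}. \<exists>q::rat. \<phi> i - \<phi> (Suc i) = complex_of_real pi * of_rat q)"
  using rational_difference_if_finite_orbit finite_orbit_if_rational_differences by auto

end
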